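(* Let $m\ge 2$. Consider the following three (not necessarily simple) graphs. (1) ($s=1$) Let $C_{4m+2}=v_0v_1\cdots v_{4m+1}v_0$. Let $\mathscr A$ be any partition of the even-indexed vertices other than $v_0$ into blocks of size $2$, $\mathscr B$ any partition of the odd-indexed vertices other than $v_{2m+1}$ into blocks of size $2$, and $\mathscr C=\{v_0,v_{2m+1}\}$. $G^1_{2m+1}(\mathscr A,\mathscr B,\mathscr C)$ is obtained from $C_{4m+2}$ by identifying the two vertices of each block of $\mathscr A\cup\mathscr B\cup\{\mathscr C\}$. (2) ($s=2$) Let $C_{4m+1}=v_0v_1\cdots v_{4m}v_0$. Let $\mathscr A$ be any partition of the even-indexed vertices other than $v_0$ into blocks of size $2$, $\mathscr B$ any partition of the odd-indexed vertices into blocks of size $2$, and $\mathscr C=\{v_0\}$. $G^2_{2m+1}(\mathscr A,\mathscr B,\mathscr C)$ is obtained from $C_{4m+1}$ by identifying the two vertices of each block of $\mathscr A\cup\mathscr B$ (and leaving $v_0$ alone). (3) ($s=3$) Let $C_{4m+3}=v_0v_1\cdots v_{4m+2}v_0$. Let $\mathscr C=\{v_0,v_{m+1},v_{3m+2}\}$, let $\mathscr A$ be any partition of the even-indexed vertices not in $\mathscr C$ into blocks of size $2$ and $\mathscr B$ any partition of the odd-indexed vertices not in $\mathscr C$ into blocks of size $2$. $G^3_{2m+1}(\mathscr A,\mathscr B,\mathscr C)$ is obtained from $C_{4m+3}$ by identifying the three vertices of $\mathscr C$ into one vertex and identifying the two vertices of each block of $\mathscr A\cup\mathscr B$. Then $\chi_{la}(G^s_{2m+1}(\mathscr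 A,\mathscr B,\mathscr C))=3$ for $s=1,2,3$.
   Context: Identifying a set of pairwise nonadjacent vertices means replacing them by one new vertex incident to all edges previously incident to any of them (parallel edges may arise). For a connected (multi)graph $G$ with edge set $E$, $|E|=q$, a local antimagic labeling is a bijection $f:E\to\{1,\dots,q\}$ such that adjacent vertices $x,y$ satisfy $f^+(x)\ne f^+(y)$, where $f^+(x)$ is the sum of the labels of the edges incident to $x$; $\chi_{la}(G)$ is the minimum number of distinct values of $f^+$ over all local antimagic labelings of $G$. *)

theory Defs
  imports Main "HOL-Library.Disjoint_Sets"
begin

text \<open>A finite multigraph is given by an edge set E and an endpoint map
  ends :: 'e => 'v * 'v (parallel edges allowed). Vertices are the endpoints.\<close>

definition mg_vertices :: "('e \<Rightarrow> 'v \<times> 'v) \<Rightarrow> 'e set \<Rightarrow> 'v set" where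
  "mg_vertices ends E = fst ` ends ` E \<union> snd ` ends ` E"

definition mg_adjacent :: "('e \<Rightarrow> 'v \<times> 'v) \<Rightarrow> 'e set \<Rightarrow> 'v \<Rightarrow> 'v \<Rightarrow> bool" where
  "mg_adjacent ends E x y \<longleftrightarrow> (\<exists>e\<in>E. ends e = (x, y) \<or> ends e = (y, x))"

definition vsum :: "('e \<Rightarrow> 'v \<times> 'v) \<Rightarrow> 'e set \<Rightarrow> ('e \<Rightarrow> nat) \<Rightarrow> 'v \<Rightarrow> nat" where
  "vsum ends E f x = (\<Sum>e\<in>{e\<in>E. fst (ends e) = x \<or> snd (ends e) = x}. f e)"

definition local_antimagic :: "('e \<Rightarrow> 'v \<times> 'v) \<Rightarrow> 'e set \<Rightarrow> ('e \<Rightarrow> nat) \<Rightarrow> bool" where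
  "local_antimagic ends E f \<longleftrightarrow>
     bij_betw f E {1..card E} \<and>
     (\<forall>x y. mg_adjacent ends E x y \<longrightarrow> vsum ends E f x \<noteq> vsum ends E f y)"

definition chi_la :: "('e \<Rightarrow> 'v \<times> 'v) \<Rightarrow> 'e set \<Rightarrow> nat" where
  "chi_la ends E = Inf {card (vsum ends E f ` mg_vertices ends E) | f. local_antimagic ends E f}"

text \<open>The cycle C_n = v_0 v_1 ... v_{n-1} v_0 with edge i joining v_i and v_{(i+1) mod n},
  after identifying each block of a partition P of {0..<n} into a single vertex
  (the new vertex is the block itself).\<close>
definition blk :: "nat set set \<Rightarrow> nat \<Rightarrow> nat set" where
  "blk P i = (THE b. b \<in> P \<and> i \<in> b)"

definition cycle_quot :: "nat \<Rightarrow> nat set set \<Rightarrow> nat \<Rightarrow> nat set \<times> nat set" where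
  "cycle_quot n P i = (blk P i, blk P (Suc i mod n))"

end

theory Submission
  imports Defs
begin

text \<open>Label edge \<open>j\<close> of the cycle (joining \<open>v\<^sub>j\<close> and \<open>v\<^bsub>j+1\<^esub>\<close>) by \<open>j/2 + 1\<close> if \<open>j\<close> is even and
  by \<open>n - (j - 1)/2\<close> if \<open>j\<close> is odd. Then every \<open>v\<^sub>j\<close> with \<open>j \<noteq> 0\<close> sees the sum \<open>n + 2\<close> or
  \<open>n + 1\<close> according to the parity of \<open>j\<close>, so identified pairs of even (odd) vertices get
  \<open>2(n + 2)\<close> (\<open>2(n + 1)\<close>), and the merged vertex containing \<open>v\<^sub>0\<close> gets a third value. Since
  no identified vertices are consecutive on the cycle, adjacent vertices get different sums.
  Conversely, the path \<open>v\<^sub>0 \<dots> v\<^sub>k\<close> for an odd \<open>k\<close> with \<open>v\<^sub>k\<close> merged into \<open>v\<^sub>0\<close> becomes an odd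
  closed walk, which no labelling with only two vertex sums can alternate along.\<close>

lemma blk_eqI:
  assumes "partition_on S Q" "b \<in> Q" "i \<in> b"
  shows "blk Q i = b"
  unfolding blk_def
proof (rule the_equality)
  show "b' = b" if "b' \<in> Q \<and> i \<in> b'" for b'
    using that assms partition_onD2[OF assms(1)] by (auto dest: disjointD)
qed (use assms in simp)

lemma blk_mem:
  assumes "partition_on S Q" "i \<in> S"
  shows "blk Q i \<in> Q" "i \<in> blk Q i"
proof -
  obtain b where "b \<in> Q" "i \<in> b"
    using assms partition_onD1 by blast
  then show "blk Q i \<in> Q" "i \<in> blk Q i"
    using blk_eqI[OF assms(1)] by auto
qed

lemma blk_image:
  assumes "partition_on S Q"
  shows "blk Q ` S = Q"
proof
  show "blk Q ` S \<subseteq> Q"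
    using blk_mem(1)[OF assms] by blast
  show "Q \<subseteq> blk Q ` S"
  proof
    fix b assume "b \<in> Q"
    then obtain i where "i \<in> b"
      using partition_onD3[OF assms] by (metis equals0I)
    with \<open>b \<in> Q\<close> have "i \<in> S" "blk Q i = b"
      using partition_onD1[OF assms] blk_eqI[OF assms] by auto
    then show "b \<in> blk Q ` S"
      by blast
  qed
qed

lemma partition_on_Un:
  assumes "partition_on X P" "partition_on Y R" "X \<inter> Y = {}"
  shows "partition_on (X \<union> Y) (P \<union> R)"
proof (rule partition_onI)
  show "\<Union>(P \<union> R) = X \<union> Y"
    using assms(1,2) by (auto dest: partition_onD1)
  show "{} \<notin> P \<union> R"
    using assms(1,2) by (auto dest: partition_onD3)
  show "disjnt p q" if "p \<in> P \<union> R" "q \<in> P \<union> R" "p \<noteq> q" for p q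
  proof -
    have "p \<in> P \<and> q \<in> P \<or> p \<in> R \<and> q \<in> R \<or> p \<inter> q \<subseteq> X \<inter> Y"
      using that(1,2) partition_onD1[OF assms(1)] partition_onD1[OF assms(2)] by auto
    then show ?thesis
      using disjointD[OF partition_onD2[OF assms(1)] _ _ \<open>p \<noteq> q\<close>]
        disjointD[OF partition_onD2[OF assms(2)] _ _ \<open>p \<noteq> q\<close>] assms(3)
      unfolding disjnt_def by blast
  qed
qed

definition cycle_pred :: "nat \<Rightarrow> nat \<Rightarrow> nat" where
  "cycle_pred n j = (j + n - 1) mod n"

lemma cycle_pred_pos: "0 < j \<Longrightarrow> j < n \<Longrightarrow> cycle_pred n j = j - 1"
proof -
  assume "0 < j" "j < n"
  then have "j + n - 1 = (j - 1) + n" by simp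
  then have "cycle_pred n j = (j - 1 + n) mod n"
    unfolding cycle_pred_def by (rule arg_cong)
  also have "\<dots> = j - 1"
    using \<open>j < n\<close> by simp
  finally show ?thesis .
qed

lemma cycle_pred_0: "cycle_pred n 0 = n - 1"
  unfolding cycle_pred_def by (cases n) auto

lemma cycle_pred_less: "j < n \<Longrightarrow> cycle_pred n j < n"
  unfolding cycle_pred_def by simp

lemma cycle_pred_Suc_mod: "e < n \<Longrightarrow> cycle_pred n (Suc e mod n) = e"
  by (cases "Suc e = n") (simp_all add: cycle_pred_0 cycle_pred_pos)

lemma Suc_cycle_pred_mod: "j < n \<Longrightarrow> Suc (cycle_pred n j) mod n = j"
  by (cases "j = 0") (simp_all add: cycle_pred_0 cycle_pred_pos)

lemma three_le_card_image_odd_closed_walk: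
  fixes g :: "nat \<Rightarrow> 'a"
  assumes "odd k" "g k = g 0" "\<And>i. i < k \<Longrightarrow> g i \<noteq> g (Suc i)"
  shows "3 \<le> card (g ` {..k})"
proof (rule ccontr)
  assume "\<not> 3 \<le> card (g ` {..k})"
  have "0 < k" using \<open>odd k\<close> by (rule odd_pos)
  then have "{g 0, g 1} \<subseteq> g ` {..k}" "card {g 0, g 1} = 2"
    using assms(3)[of 0] by auto
  moreover have "card (g ` {..k}) \<le> card {g 0, g 1}"
    using \<open>\<not> 3 \<le> card (g ` {..k})\<close> \<open>card {g 0, g 1} = 2\<close> by simp
  ultimately have two_values: "g ` {..k} = {g 0, g 1}"
    by (metis card_seteq finite_atMost finite_imageI)
  have alternating: "g i = (if even i then g 0 else g 1)" if "i \<le> k" for i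
    using that
  proof (induction i)
    case (Suc i)
    then have "g (Suc i) \<in> {g 0, g 1}" "g (Suc i) \<noteq> g i"
      using two_values assms(3)[of i] by auto
    with Suc show ?case
      by auto
  qed simp
  show False
    using alternating[of k] assms(1,2) \<open>card {g 0, g 1} = 2\<close> by auto
qed

lemma mg_adjacent_in_vertices: "mg_adjacent ends E x y \<Longrightarrow> x \<in> mg_vertices ends E"
  unfolding mg_adjacent_def mg_vertices_def by force

lemma three_le_card_vsum_image_odd_closed_walk:
  assumes "finite E" "local_antimagic ends E f"
    and "odd k" "w k = w 0" "\<And>i. i < k \<Longrightarrow> mg_adjacent ends E (w i) (w (Suc i))"
  shows "3 \<le> card (vsum ends E f ` mg_vertices ends E)"
proof -
  have "w i \<in> mg_vertices ends E" if "i \<le> k" for i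
  proof (cases "i = k")
    case True
    then show ?thesis
      using assms(4) assms(5)[of 0] odd_pos[OF assms(3)] mg_adjacent_in_vertices by metis
  next
    case False
    with that have "i < k" by simp
    then show ?thesis
      by (rule mg_adjacent_in_vertices[OF assms(5)])
  qed
  then have "vsum ends E f ` w ` {..k} \<subseteq> vsum ends E f ` mg_vertices ends E"
    by auto
  moreover have "finite (vsum ends E f ` mg_vertices ends E)"
    using assms(1) unfolding mg_vertices_def by simp
  moreover have "3 \<le> card ((vsum ends E f \<circ> w) ` {..k})"
    using assms(2,5) unfolding local_antimagic_def
    by (intro three_le_card_image_odd_closed_walk) (simp_all add: assms(3,4))
  ultimately show ?thesis
    by (metis card_mono image_comp order_trans)
qed

lemma chi_la_eqI:
  assumes "local_antimagic ends E f" "card (vsum ends E f ` mg_vertices ends E) = k"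
    and "\<And>g. local_antimagic ends E g \<Longrightarrow> k \<le> card (vsum ends E g ` mg_vertices ends E)"
  shows "chi_la ends E = k"
  unfolding chi_la_def
  by (rule cInf_eq_minimum) (use assms in auto)

lemma mg_vertices_cycle_quot:
  assumes "partition_on {..<n} Q"
  shows "mg_vertices (cycle_quot n Q) {..<n} = Q"
proof -
  have "mg_vertices (cycle_quot n Q) {..<n} = blk Q ` {..<n} \<union> (\<lambda>i. blk Q (Suc i mod n)) ` {..<n}"
    unfolding mg_vertices_def cycle_quot_def image_image by simp
  moreover have "(\<lambda>i. blk Q (Suc i mod n)) ` {..<n} \<subseteq> Q"
    using blk_mem(1)[OF assms] by auto
  ultimately show ?thesis
    using blk_image[OF assms] by auto
qed

lemma mg_adjacent_cycle_quot_iff: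
  "mg_adjacent (cycle_quot n Q) {..<n} x y \<longleftrightarrow>
     (\<exists>i<n. {x, y} = {blk Q i, blk Q (Suc i mod n)})"
  unfolding mg_adjacent_def cycle_quot_def by (auto simp: doubleton_eq_iff)

lemma vsum_cycle_quot:
  assumes part: "partition_on {..<n} Q"
    and loopless: "\<And>b i. b \<in> Q \<Longrightarrow> i \<in> b \<Longrightarrow> Suc i mod n \<notin> b"
    and "b \<in> Q"
  shows "vsum (cycle_quot n Q) {..<n} f b = (\<Sum>j\<in>b. f j + f (cycle_pred n j))"
proof -
  have b_sub: "b \<subseteq> {..<n}"
    using part \<open>b \<in> Q\<close> partition_onD1 by blast
  have blk_iff: "blk Q e = b \<longleftrightarrow> e \<in> b" if "e < n" for e
    using blk_mem[OF part] blk_eqI[OF part \<open>b \<in> Q\<close>] that by blast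
  have "fst (cycle_quot n Q e) = b \<or> snd (cycle_quot n Q e) = b \<longleftrightarrow> e \<in> b \<or> Suc e mod n \<in> b"
    if "e < n" for e
    using blk_iff[OF that] blk_iff[of "Suc e mod n"] that unfolding cycle_quot_def by simp
  then have "{e\<in>{..<n}. fst (cycle_quot n Q e) = b \<or> snd (cycle_quot n Q e) = b}
      = b \<union> {e\<in>{..<n}. Suc e mod n \<in> b}"
    using b_sub by auto
  moreover have "b \<inter> {e\<in>{..<n}. Suc e mod n \<in> b} = {}"
    using loopless \<open>b \<in> Q\<close> by blast
  moreover have "finite b"
    using b_sub finite_subset by blast
  moreover have "(\<Sum>e\<in>{e\<in>{..<n}. Suc e mod n \<in> b}. f e) = (\<Sum>j\<in>b. f (cycle_pred n j))"
    by (rule sum.reindex_bij_witness[where i = "cycle_pred n" and j = "\<lambda>e. Suc e mod n"])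
      (use b_sub cycle_pred_less cycle_pred_Suc_mod Suc_cycle_pred_mod in auto)
  ultimately show ?thesis
    unfolding vsum_def by (simp add: sum.union_disjoint sum.distrib)
qed

definition cycle_label :: "nat \<Rightarrow> nat \<Rightarrow> nat" where
  "cycle_label n j = (if even j then j div 2 + 1 else n - j div 2)"

lemma cycle_label_even: "cycle_label n (2 * p) = p + 1"
  unfolding cycle_label_def by simp

lemma cycle_label_odd: "cycle_label n (2 * p + 1) = n - p"
  unfolding cycle_label_def by simp

lemma nat_even_odd_cases:
  fixes j :: nat
  obtains p where "j = 2 * p" | p where "j = 2 * p + 1"
  by (metis evenE oddE)

lemma inj_on_cycle_label: "inj_on (cycle_label n) {..<n}"
proof (rule inj_onI)
  fix i j assume "i \<in> {..<n}" "j \<in> {..<n}" and eq: "cycle_label n i = cycle_label n j"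
  then have "i < n" "j < n" by simp_all
  show "i = j"
    by (rule nat_even_odd_cases[of i]; rule nat_even_odd_cases[of j]) (use eq \<open>i < n\<close> \<open>j < n\<close> in \<open>simp_all add: cycle_label_def\<close>)
qed

lemma cycle_label_image: "cycle_label n ` {..<n} = {1..n}"
proof -
  have "cycle_label n j \<in> {1..n}" if "j < n" for j
    by (rule nat_even_odd_cases[of j]) (use that in \<open>simp_all add: cycle_label_def\<close>)
  then have "cycle_label n ` {..<n} \<subseteq> {1..n}"
    by auto
  moreover have "card (cycle_label n ` {..<n}) = card {1..n}"
    using card_image[OF inj_on_cycle_label] by simp
  ultimately show ?thesis
    by (simp add: card_subset_eq)
qed

lemma bij_betw_cycle_label: "bij_betw (cycle_label n) {..<n} {1..n}"
  unfolding bij_betw_def using inj_on_cycle_label cycle_label_image by blast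

lemma cycle_label_vertex_sum:
  assumes "j < n"
  shows "cycle_label n j + cycle_label n (cycle_pred n j) =
    (if j = 0 then n div 2 + 2 else if odd j then n + 1 else n + 2)"
proof (cases "j = 0")
  case True
  then have "cycle_label n j = 1"
    using cycle_label_even[of n 0] by simp
  moreover have "cycle_pred n j = n - 1"
    using True cycle_pred_0 by simp
  moreover have "cycle_label n (n - 1) = n div 2 + 1"
  proof (cases rule: nat_even_odd_cases[of "n - 1"])
    case (1 p)
    then have "n = 2 * p + 1" using assms by simp
    then show ?thesis using 1 cycle_label_even[of n p] by simp
  next
    case (2 p)
    then have "n = 2 * p + 2" using assms by simp
    then show ?thesis using 2 cycle_label_odd[of n p] by simp
  qed
  ultimately show ?thesis
    using True by simp
next
  case False
  then have pred: "cycle_pred n j = j - 1"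
    using assms by (simp add: cycle_pred_pos)
  show ?thesis
  proof (cases rule: nat_even_odd_cases[of "j - 1"])
    case (1 p)
    then have "j = 2 * p + 1" using False by simp
    then show ?thesis
      using 1 pred assms cycle_label_even[of n p] cycle_label_odd[of n p] by simp
  next
    case (2 p)
    then have "j = 2 * (p + 1)" using False by simp
    then show ?thesis
      using 2 pred assms cycle_label_even[of n "p + 1"] cycle_label_odd[of n p] by simp
  qed
qed

locale cycle_parity_quotient =
  fixes n :: nat and A B :: "nat set set" and C :: "nat set"
  assumes partition_even: "partition_on {i. i < n \<and> even i \<and> i \<notin> C} A"
    and card_even_block: "\<And>b. b \<in> A \<Longrightarrow> card b = 2"
    and partition_odd: "partition_on {i. i < n \<and> odd i \<and> i \<notin> C} B"
    and card_odd_block: "\<And>b. b \<in> B \<Longrightarrow> card b = 2"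
    and C_subset: "C \<subseteq> {..<n}"
    and zero_in_C: "0 \<in> C"
    and C_no_consecutive: "\<And>i. i \<in> C \<Longrightarrow> Suc i mod n \<notin> C"
    and two_notin_C: "2 \<notin> C"
    and two_less: "2 < n"
begin

abbreviation blocks :: "nat set set" where
  "blocks \<equiv> A \<union> B \<union> {C}"

lemma even_block_mem: "b \<in> A \<Longrightarrow> j \<in> b \<Longrightarrow> j < n \<and> even j \<and> j \<notin> C"
  using partition_onD1[OF partition_even] by blast

lemma odd_block_mem: "b \<in> B \<Longrightarrow> j \<in> b \<Longrightarrow> j < n \<and> odd j \<and> j \<notin> C"
  using partition_onD1[OF partition_odd] by blast

lemma partition_blocks: "partition_on {..<n} blocks"
proof -
  have "partition_on ({i. i < n \<and> even i \<and> i \<notin> C} \<union> {i. i < n \<and> odd i \<and> i \<notin> C} \<union> C) blocks"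
    using zero_in_C
    by (intro partition_on_Un partition_even partition_odd partition_on_space) auto
  moreover have "{i. i < n \<and> even i \<and> i \<notin> C} \<union> {i. i < n \<and> odd i \<and> i \<notin> C} \<union> C = {..<n}"
    using C_subset by auto
  ultimately show ?thesis
    by simp
qed

lemma one_notin_C: "1 \<notin> C"
  using C_no_consecutive[OF zero_in_C] two_less by simp

lemma blocks_loopless:
  assumes "b \<in> blocks" "i \<in> b"
  shows "Suc i mod n \<notin> b"
proof -
  have "i < n"
    using assms C_subset even_block_mem odd_block_mem by blast
  then have wrap: "Suc i mod n = Suc i \<or> Suc i mod n = 0"
    by (cases "Suc i = n") auto
  consider "b \<in> A" | "b \<in> B" | "b = C"
    using assms(1) by blast
  then show ?thesis
  proof cases
    case 1
    then have "even i"
      using even_block_mem assms(2) by blast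
    then have "\<not> (even (Suc i mod n) \<and> Suc i mod n \<notin> C)"
      using wrap zero_in_C by auto
    then show ?thesis
      using even_block_mem[OF 1] by blast
  next
    case 2
    then have "odd i"
      using odd_block_mem assms(2) by blast
    then have "\<not> (odd (Suc i mod n) \<and> Suc i mod n \<notin> C)"
      using wrap zero_in_C by auto
    then show ?thesis
      using odd_block_mem[OF 2] by blast
  next
    case 3
    then show ?thesis
      using C_no_consecutive assms(2) by blast
  qed
qed

definition merged_sum :: nat where
  "merged_sum = (\<Sum>j\<in>C. cycle_label n j + cycle_label n (cycle_pred n j))"

definition vertex_value :: "nat \<Rightarrow> nat" where
  "vertex_value i = (if i \<in> C then merged_sum else if even i then 2 * (n + 2) else 2 * (n + 1))"

lemma vsum_cycle_label_blk:
  assumes "i < n"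
  shows "vsum (cycle_quot n blocks) {..<n} (cycle_label n) (blk blocks i) = vertex_value i"
proof -
  let ?b = "blk blocks i"
  have b: "?b \<in> blocks" "i \<in> ?b"
    using blk_mem[OF partition_blocks] assms by auto
  have vsum_b: "vsum (cycle_quot n blocks) {..<n} (cycle_label n) ?b =
      (\<Sum>j\<in>?b. cycle_label n j + cycle_label n (cycle_pred n j))"
    by (rule vsum_cycle_quot[OF partition_blocks blocks_loopless b(1)])
  consider "?b \<in> A" | "?b \<in> B" | "?b = C"
    using b(1) by blast
  then show ?thesis
  proof cases
    case 1
    have "cycle_label n j + cycle_label n (cycle_pred n j) = n + 2" if "j \<in> ?b" for j
    proof -
      have "j < n" "even j" "j \<notin> C"
        using even_block_mem[OF 1 that] by auto
      moreover have "j \<noteq> 0"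
        using \<open>j \<notin> C\<close> zero_in_C by metis
      ultimately show ?thesis
        by (simp add: cycle_label_vertex_sum)
    qed
    then have "(\<Sum>j\<in>?b. cycle_label n j + cycle_label n (cycle_pred n j)) = (\<Sum>j\<in>?b. n + 2)"
      by (rule sum.cong[OF refl])
    then show ?thesis
      using vsum_b card_even_block[OF 1] even_block_mem[OF 1 b(2)]
      by (simp add: vertex_value_def)
  next
    case 2
    have "cycle_label n j + cycle_label n (cycle_pred n j) = n + 1" if "j \<in> ?b" for j
    proof -
      have "j < n" "odd j"
        using odd_block_mem[OF 2 that] by auto
      moreover have "j \<noteq> 0"
        using odd_pos[OF \<open>odd j\<close>] by simp
      ultimately show ?thesis
        by (simp add: cycle_label_vertex_sum)
    qed
    then have "(\<Sum>j\<in>?b. cycle_label n j + cycle_label n (cycle_pred n j)) = (\<Sum>j\<in>?b. n + 1)"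
      by (rule sum.cong[OF refl])
    then show ?thesis
      using vsum_b card_odd_block[OF 2] odd_block_mem[OF 2 b(2)]
      by (simp add: vertex_value_def)
  next
    case 3
    then show ?thesis
      using vsum_b b(2) by (simp add: vertex_value_def merged_sum_def)
  qed
qed

lemma vertex_value_Suc_mod_neq:
  assumes "i < n" "merged_sum \<notin> {2 * (n + 1), 2 * (n + 2)}"
  shows "vertex_value i \<noteq> vertex_value (Suc i mod n)"
proof (cases "i \<in> C \<or> Suc i mod n \<in> C")
  case True
  with assms(2) C_no_consecutive show ?thesis
    unfolding vertex_value_def by auto
next
  case False
  with zero_in_C have "Suc i mod n = Suc i"
    using assms(1) by (cases "Suc i = n") auto
  with False show ?thesis
    unfolding vertex_value_def by auto
qed

lemma vsum_cycle_label_image: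
  "vsum (cycle_quot n blocks) {..<n} (cycle_label n) ` mg_vertices (cycle_quot n blocks) {..<n}
     = {merged_sum, 2 * (n + 2), 2 * (n + 1)}"
proof -
  have "mg_vertices (cycle_quot n blocks) {..<n} = blk blocks ` {..<n}"
    using mg_vertices_cycle_quot[OF partition_blocks] blk_image[OF partition_blocks] by simp
  then have "vsum (cycle_quot n blocks) {..<n} (cycle_label n) ` mg_vertices (cycle_quot n blocks) {..<n}
      = vertex_value ` {..<n}"
    using vsum_cycle_label_blk by (simp add: image_image)
  also have "\<dots> = {merged_sum, 2 * (n + 2), 2 * (n + 1)}"
  proof
    show "vertex_value ` {..<n} \<subseteq> {merged_sum, 2 * (n + 2), 2 * (n + 1)}"
      unfolding vertex_value_def by auto
    have "vertex_value 0 = merged_sum" "vertex_value 2 = 2 * (n + 2)" "vertex_value 1 = 2 * (n + 1)"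
      using zero_in_C one_notin_C two_notin_C unfolding vertex_value_def by auto
    moreover have "0 \<in> {..<n}" "1 \<in> {..<n}" "2 \<in> {..<n}"
      using two_less by auto
    ultimately show "{merged_sum, 2 * (n + 2), 2 * (n + 1)} \<subseteq> vertex_value ` {..<n}"
      by (metis empty_subsetI image_eqI insert_subset)
  qed
  finally show ?thesis .
qed

lemma local_antimagic_cycle_label:
  assumes "merged_sum \<notin> {2 * (n + 1), 2 * (n + 2)}"
  shows "local_antimagic (cycle_quot n blocks) {..<n} (cycle_label n)"
  unfolding local_antimagic_def
proof (intro conjI allI impI)
  show "bij_betw (cycle_label n) {..<n} {1..card {..<n}}"
    using bij_betw_cycle_label by simp
  fix x y
  assume "mg_adjacent (cycle_quot n blocks) {..<n} x y"
  then obtain i where "i < n" "{x, y} = {blk blocks i, blk blocks (Suc i mod n)}"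
    unfolding mg_adjacent_cycle_quot_iff by blast
  moreover have "vsum (cycle_quot n blocks) {..<n} (cycle_label n) (blk blocks i) \<noteq>
      vsum (cycle_quot n blocks) {..<n} (cycle_label n) (blk blocks (Suc i mod n))"
    using \<open>i < n\<close> vsum_cycle_label_blk vertex_value_Suc_mod_neq[OF _ assms] by simp
  ultimately show "vsum (cycle_quot n blocks) {..<n} (cycle_label n) x \<noteq>
      vsum (cycle_quot n blocks) {..<n} (cycle_label n) y"
    by (auto simp: doubleton_eq_iff)
qed

text \<open>Allowing \<open>k = n\<close> covers the case where the whole odd cycle is the closed walk.\<close>

lemma three_le_card_vsum_image:
  assumes "odd k" "k \<le> n" "k mod n \<in> C"
    and "local_antimagic (cycle_quot n blocks) {..<n} f"
  shows "3 \<le> card (vsum (cycle_quot n blocks) {..<n} f ` mg_vertices (cycle_quot n blocks) {..<n})"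
proof (rule three_le_card_vsum_image_odd_closed_walk[where w = "\<lambda>i. blk blocks (i mod n)"])
  show "blk blocks (k mod n) = blk blocks (0 mod n)"
    using blk_eqI[OF partition_blocks _ assms(3)] blk_eqI[OF partition_blocks _ zero_in_C] by simp
  show "mg_adjacent (cycle_quot n blocks) {..<n} (blk blocks (i mod n)) (blk blocks (Suc i mod n))"
    if "i < k" for i
    using that assms(2) unfolding mg_adjacent_cycle_quot_iff by (auto intro!: exI[of _ i])
qed (use assms in simp_all)

theorem chi_la_eq_3:
  assumes "merged_sum \<notin> {2 * (n + 1), 2 * (n + 2)}"
    and "odd k" "k \<le> n" "k mod n \<in> C"
  shows "chi_la (cycle_quot n (A \<union> B \<union> {C})) {..<n} = 3"
proof (rule chi_la_eqI)
  show "local_antimagic (cycle_quot n blocks) {..<n} (cycle_label n)"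
    using assms(1) by (rule local_antimagic_cycle_label)
  show "card (vsum (cycle_quot n blocks) {..<n} (cycle_label n) ` mg_vertices (cycle_quot n blocks) {..<n}) = 3"
    using assms(1) unfolding vsum_cycle_label_image by auto
qed (use three_le_card_vsum_image assms(2-4) in blast)

end

lemma chi_la_G1_eq_3:
  fixes m :: nat
  assumes "0 < m"
    and "partition_on {i. i < 4*m+2 \<and> even i \<and> i \<noteq> 0} A" "\<forall>b\<in>A. card b = 2"
    and "partition_on {i. i < 4*m+2 \<and> odd i \<and> i \<noteq> 2*m+1} B" "\<forall>b\<in>B. card b = 2"
  shows "chi_la (cycle_quot (4*m+2) (A \<union> B \<union> {{0, 2*m+1}})) {..<4*m+2} = 3"
proof -
  interpret cycle_parity_quotient "4*m+2" A B "{0, 2*m+1}"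
  proof
    have "{i. i < 4*m+2 \<and> even i \<and> i \<notin> {0, 2*m+1}} = {i. i < 4*m+2 \<and> even i \<and> i \<noteq> 0}"
      by auto
    with assms(2) show "partition_on {i. i < 4*m+2 \<and> even i \<and> i \<notin> {0, 2*m+1}} A"
      by simp
    have "{i. i < 4*m+2 \<and> odd i \<and> i \<notin> {0, 2*m+1}} = {i. i < 4*m+2 \<and> odd i \<and> i \<noteq> 2*m+1}"
      using odd_pos by auto
    with assms(4) show "partition_on {i. i < 4*m+2 \<and> odd i \<and> i \<notin> {0, 2*m+1}} B"
      by simp
  qed (use assms in auto)
  have "merged_sum = 6*m+6"
    unfolding merged_sum_def by (simp add: cycle_label_vertex_sum)
  with assms(1) show ?thesis
    using chi_la_eq_3[of "2*m+1"] by simp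
qed

lemma chi_la_G2_eq_3:
  fixes m :: nat
  assumes "0 < m"
    and "partition_on {i. i < 4*m+1 \<and> even i \<and> i \<noteq> 0} A" "\<forall>b\<in>A. card b = 2"
    and "partition_on {i. i < 4*m+1 \<and> odd i} B" "\<forall>b\<in>B. card b = 2"
  shows "chi_la (cycle_quot (4*m+1) (A \<union> B \<union> {{0}})) {..<4*m+1} = 3"
proof -
  interpret cycle_parity_quotient "4*m+1" A B "{0}"
  proof
    have "{i. i < 4*m+1 \<and> odd i \<and> i \<notin> {0}} = {i. i < 4*m+1 \<and> odd i}"
      using odd_pos by auto
    with assms(4) show "partition_on {i. i < 4*m+1 \<and> odd i \<and> i \<notin> {0}} B"
      by simp
  qed (use assms in auto)
  have "merged_sum = 2*m+2"
    unfolding merged_sum_def by (simp add: cycle_label_vertex_sum)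
  with assms(1) show ?thesis
    using chi_la_eq_3[of "4*m+1"] by simp
qed

lemma chi_la_G3_eq_3:
  fixes m :: nat
  assumes "2 \<le> m"
    and "partition_on {i. i < 4*m+3 \<and> even i \<and> i \<notin> {0, m+1, 3*m+2}} A" "\<forall>b\<in>A. card b = 2"
    and "partition_on {i. i < 4*m+3 \<and> odd i \<and> i \<notin> {0, m+1, 3*m+2}} B" "\<forall>b\<in>B. card b = 2"
  shows "chi_la (cycle_quot (4*m+3) (A \<union> B \<union> {{0, m+1, 3*m+2}})) {..<4*m+3} = 3"
proof -
  interpret cycle_parity_quotient "4*m+3" A B "{0, m+1, 3*m+2}"
    by unfold_locales (use assms in auto)
  have "(4*m+3) div 2 = 2*m+1"
    by linarith
  then have "merged_sum = 10*m+12"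
    unfolding merged_sum_def by (cases "even m") (simp_all add: cycle_label_vertex_sum)
  moreover define k where "k = (if even m then m+1 else 3*m+2)"
  then have "odd k" "k \<le> 4*m+3" "k mod (4*m+3) \<in> {0, m+1, 3*m+2}"
    by auto
  ultimately show ?thesis
    using chi_la_eq_3 by simp
qed

theorem mainTheorem10:
  fixes m :: nat
  assumes "m \<ge> 2"
  shows
   "(\<forall>A B. partition_on {i. i < 4*m+2 \<and> even i \<and> i \<noteq> 0} A \<and> (\<forall>b\<in>A. card b = 2) \<and>
           partition_on {i. i < 4*m+2 \<and> odd i \<and> i \<noteq> 2*m+1} B \<and> (\<forall>b\<in>B. card b = 2) \<longrightarrow>
      chi_la (cycle_quot (4*m+2) (A \<union> B \<union> {{0, 2*m+1}})) {..<4*m+2} = 3)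
  \<and> (\<forall>A B. partition_on {i. i < 4*m+1 \<and> even i \<and> i \<noteq> 0} A \<and> (\<forall>b\<in>A. card b = 2) \<and>
           partition_on {i. i < 4*m+1 \<and> odd i} B \<and> (\<forall>b\<in>B. card b = 2) \<longrightarrow>
      chi_la (cycle_quot (4*m+1) (A \<union> B \<union> {{0}})) {..<4*m+1} = 3)
  \<and> (\<forall>A B. partition_on {i. i < 4*m+3 \<and> even i \<and> i \<notin> {0, m+1, 3*m+2}} A \<and> (\<forall>b\<in>A. card b = 2) \<and>
           partition_on {i. i < 4*m+3 \<and> odd i \<and> i \<notin> {0, m+1, 3*m+2}} B \<and> (\<forall>b\<in>B. card b = 2) \<longrightarrow>
      chi_la (cycle_quot (4*m+3) (A \<union> B \<union> {{0, m+1, 3*m+2}})) {..<4*m+3} = 3)"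
proof -
  have "0 < m"
    using assms by simp
  then show ?thesis
    using chi_la_G1_eq_3 chi_la_G2_eq_3 chi_la_G3_eq_3[OF assms] by blast
qed

end
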